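(* Let $|\mathcal{T}|=2$ and let $P\in\Delta_{\mathcal{T},\mathcal{X},\mathcal{Y}}$ be such that $\operatorname{supp}(\Delta_P)=\mathcal{T}\times\mathcal{X}\times\mathcal{Y}$. Suppose $\tilde Q$ lies in the relative interior of $\Delta_P$ and $\tilde Q\in\arg\max_{Q\in\Delta_P}H_Q(T\mid X,Y)$. Then under $\tilde Q$, $T$ is conditionally independent of $X$ given $Y$, or $T$ is conditionally independent of $Y$ given $X$ (or both). Consequently $UI(T:X\setminus Y)=0$ or $UI(T:Y\setminus X)=0$.
   Context: $T,X,Y$ are random variables with finite state spaces $\mathcal{T},\mathcal{X},\mathcal{Y}$; $\Delta_{\mathcal{T},\mathcal{X},\mathcal{Y}}$ is the set of all joint distributions on $\mathcal{T}\times\mathcal{X}\times\mathcal{Y}$. For $P\in\Delta_{\mathcal{T},\mathcal{X},\mathcal{Y}}$, $\Delta_P=\{Q\in\Delta_{\mathcal{T},\mathcal{X},\mathcal{Y}}: Q(X=x,T=t)=P(X=x,T=t),\ Q(Y=y,T=t)=P(Y=y,T=t)\ \forall x,y,t\}$ and $\operatorname{supp}(\Delta_P)=\bigcup_{Q\in\Delta_P}\operatorname{supp}(Q)$. $UI(T:X\setminus Y)=\min_{Q\in\Delta_P}I_Q(T:X\mid Y)$, and $UI(T:Y\setminus X)=\min_{Q\in\Delta_P}I_Q(T:Y\mid X)$ (note $\Delta_P$ is symmetric in $X,Y$). *)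

theory Defs
  imports "HOL-Analysis.Analysis"
begin

text \<open>A joint distribution of (T,X,Y) on finite state spaces 't, 'x, 'y is a
  vector in the Euclidean space real^('t \<times> 'x \<times> 'y), the entry at (t,x,y)
  being P(T=t, X=x, Y=y).\<close>

type_synonym ('t,'x,'y) jdist = "real ^ ('t \<times> 'x \<times> 'y)"

definition is_dist :: "('t::finite,'x::finite,'y::finite) jdist \<Rightarrow> bool" where
  "is_dist Q \<longleftrightarrow> (\<forall>z. Q $ z \<ge> 0) \<and> (\<Sum>z\<in>UNIV. Q $ z) = 1"

definition pTX :: "('t::finite,'x::finite,'y::finite) jdist \<Rightarrow> 't \<Rightarrow> 'x \<Rightarrow> real" where
  "pTX Q t x = (\<Sum>y\<in>UNIV. Q $ (t,x,y))"

definition pTY :: "('t::finite,'x::finite,'y::finite) jdist \<Rightarrow> 't \<Rightarrow> 'y \<Rightarrow> real" where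
  "pTY Q t y = (\<Sum>x\<in>UNIV. Q $ (t,x,y))"

definition pXY :: "('t::finite,'x::finite,'y::finite) jdist \<Rightarrow> 'x \<Rightarrow> 'y \<Rightarrow> real" where
  "pXY Q x y = (\<Sum>t\<in>UNIV. Q $ (t,x,y))"

definition pX :: "('t::finite,'x::finite,'y::finite) jdist \<Rightarrow> 'x \<Rightarrow> real" where
  "pX Q x = (\<Sum>t\<in>UNIV. \<Sum>y\<in>UNIV. Q $ (t,x,y))"

definition pY :: "('t::finite,'x::finite,'y::finite) jdist \<Rightarrow> 'y \<Rightarrow> real" where
  "pY Q y = (\<Sum>t\<in>UNIV. \<Sum>x\<in>UNIV. Q $ (t,x,y))"

definition DeltaP :: "('t::finite,'x::finite,'y::finite) jdist \<Rightarrow> ('t,'x,'y) jdist set" where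
  "DeltaP P = {Q. is_dist Q \<and> (\<forall>t x. pTX Q t x = pTX P t x) \<and> (\<forall>t y. pTY Q t y = pTY P t y)}"

definition supp :: "('t::finite,'x::finite,'y::finite) jdist \<Rightarrow> ('t \<times> 'x \<times> 'y) set" where
  "supp Q = {z. Q $ z \<noteq> 0}"

definition suppDeltaP :: "('t::finite,'x::finite,'y::finite) jdist \<Rightarrow> ('t \<times> 'x \<times> 'y) set" where
  "suppDeltaP P = (\<Union>Q\<in>DeltaP P. supp Q)"

definition condH_T_XY :: "('t::finite,'x::finite,'y::finite) jdist \<Rightarrow> real" where
  "condH_T_XY Q = - (\<Sum>(t,x,y)\<in>UNIV. if Q $ (t,x,y) = 0 then 0
       else Q $ (t,x,y) * ln (Q $ (t,x,y) / pXY Q x y))"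

definition condMI_TX_Y :: "('t::finite,'x::finite,'y::finite) jdist \<Rightarrow> real" where
  "condMI_TX_Y Q = (\<Sum>(t,x,y)\<in>UNIV. if Q $ (t,x,y) = 0 then 0
       else Q $ (t,x,y) * ln (Q $ (t,x,y) * pY Q y / (pTY Q t y * pXY Q x y)))"

definition condMI_TY_X :: "('t::finite,'x::finite,'y::finite) jdist \<Rightarrow> real" where
  "condMI_TY_X Q = (\<Sum>(t,x,y)\<in>UNIV. if Q $ (t,x,y) = 0 then 0
       else Q $ (t,x,y) * ln (Q $ (t,x,y) * pX Q x / (pTX Q t x * pXY Q x y)))"

text \<open>Unique informations, UI(T:X\Y) = min over \<Delta>_P of I_Q(T:X|Y) (the minimum
  exists, so it equals the infimum).\<close>
definition UI_X :: "('t::finite,'x::finite,'y::finite) jdist \<Rightarrow> real" where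
  "UI_X P = Inf (condMI_TX_Y ` DeltaP P)"

definition UI_Y :: "('t::finite,'x::finite,'y::finite) jdist \<Rightarrow> real" where
  "UI_Y P = Inf (condMI_TY_X ` DeltaP P)"

definition indep_T_X_given_Y :: "('t::finite,'x::finite,'y::finite) jdist \<Rightarrow> bool" where
  "indep_T_X_given_Y Q \<longleftrightarrow> (\<forall>t x y. Q $ (t,x,y) * pY Q y = pTY Q t y * pXY Q x y)"

definition indep_T_Y_given_X :: "('t::finite,'x::finite,'y::finite) jdist \<Rightarrow> bool" where
  "indep_T_Y_given_X Q \<longleftrightarrow> (\<forall>t x y. Q $ (t,x,y) * pX Q x = pTX Q t x * pXY Q x y)"

end

theory Submission
  imports Defs
begin

text \<open>Full support of \<Delta>_P makes a relative-interior point Qt strictly positive, so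
  H(T|X,Y) is differentiable at Qt along every direction of \<Delta>_P. Stationarity along the
  basic moves e(t,x,y) - e(t,x,y') - e(t,x',y) + e(t,x',y') says that every 2x2 minor of the
  matrix (Qt(t | x,y))_{x,y} vanishes. For binary T, both p = Qt(t0 | \<cdot>,\<cdot>) and 1 - p then
  have rank one, which forces every 2x2 block of p to be constant along its rows or along its
  columns; this pattern is necessarily global, so Qt(t | x,y) does not depend on y or does not
  depend on x, i.e. T is conditionally independent of Y given X or of X given Y. The
  corresponding conditional mutual information of Qt vanishes, and since conditional mutual
  information is nonnegative (Gibbs' inequality) it is the minimum over \<Delta>_P.\<close>

lemma sum_UNIV_triple:
  fixes f :: "'t::finite \<times> 'x::finite \<times> 'y::finite \<Rightarrow> 'a::comm_monoid_add"
  shows "(\<Sum>z\<in>UNIV. f z) = (\<Sum>t\<in>UNIV. \<Sum>x\<in>UNIV. \<Sum>y\<in>UNIV. f (t,x,y))"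
  by (simp add: UNIV_Times_UNIV[symmetric] sum.cartesian_product del: UNIV_Times_UNIV)

lemma sum_UNIV_triple_Y_first:
  fixes f :: "'t::finite \<times> 'x::finite \<times> 'y::finite \<Rightarrow> 'a::comm_monoid_add"
  shows "(\<Sum>z\<in>UNIV. f z) = (\<Sum>y\<in>UNIV. \<Sum>t\<in>UNIV. \<Sum>x\<in>UNIV. f (t,x,y))"
  unfolding sum_UNIV_triple[of f] by (subst sum.swap) (intro sum.cong refl sum.swap)

lemma sum_UNIV_triple_XY_first:
  fixes f :: "'t::finite \<times> 'x::finite \<times> 'y::finite \<Rightarrow> 'a::comm_monoid_add"
  shows "(\<Sum>z\<in>UNIV. f z) = (\<Sum>x\<in>UNIV. \<Sum>y\<in>UNIV. \<Sum>t\<in>UNIV. f (t,x,y))"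
  unfolding sum_UNIV_triple[of f] by (subst sum.swap) (intro sum.cong refl sum.swap)

lemma sum_pXY: "(\<Sum>x\<in>UNIV. \<Sum>y\<in>UNIV. pXY Q x y) = (\<Sum>z\<in>UNIV. Q $ z)"
  unfolding sum_UNIV_triple_XY_first[of "\<lambda>z. Q $ z"] pXY_def ..

lemma pY_eq_sum_pXY: "pY Q y = (\<Sum>x\<in>UNIV. pXY Q x y)"
  unfolding pY_def pXY_def by (rule sum.swap)

lemma pY_eq_sum_pTY: "pY Q y = (\<Sum>t\<in>UNIV. pTY Q t y)"
  unfolding pY_def pTY_def ..

lemma sum_pY: "(\<Sum>y\<in>UNIV. pY Q y) = (\<Sum>z\<in>UNIV. Q $ z)"
  unfolding sum_UNIV_triple_Y_first[of "\<lambda>z. Q $ z"] pY_def ..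

lemma nth_le_pTY: "(\<And>z. 0 \<le> Q $ z) \<Longrightarrow> Q $ (t,x,y) \<le> pTY Q t y"
  unfolding pTY_def by (rule member_le_sum[where f = "\<lambda>x. Q $ (t,x,y)"]) auto

lemma nth_le_pXY: "(\<And>z. 0 \<le> Q $ z) \<Longrightarrow> Q $ (t,x,y) \<le> pXY Q x y"
  unfolding pXY_def by (rule member_le_sum[where f = "\<lambda>t. Q $ (t,x,y)"]) auto

lemma nth_le_pY:
  assumes "\<And>z. 0 \<le> Q $ z"
  shows "Q $ (t,x,y) \<le> pY Q y"
proof -
  have "Q $ (t,x,y) \<le> pTY Q t y" by (rule nth_le_pTY[OF assms])
  also have "\<dots> \<le> pY Q y" unfolding pY_eq_sum_pTY
    by (rule member_le_sum) (auto simp: pTY_def assms sum_nonneg)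
  finally show ?thesis .
qed

lemma pXY_pos: "(\<And>z. 0 < Q $ z) \<Longrightarrow> 0 < pXY Q x y"
  unfolding pXY_def by (rule sum_pos) auto

lemma DeltaP_nonneg: "Q \<in> DeltaP P \<Longrightarrow> 0 \<le> Q $ z"
  unfolding DeltaP_def is_dist_def by blast

definition condT :: "('t::finite,'x::finite,'y::finite) jdist \<Rightarrow> 't \<Rightarrow> 'x \<Rightarrow> 'y \<Rightarrow> real" where
  "condT Q t x y = Q $ (t,x,y) / pXY Q x y"

lemma sum_condT: "(\<And>z. 0 < Q $ z) \<Longrightarrow> (\<Sum>t\<in>UNIV. condT Q t x y) = 1"
  using pXY_pos[of Q x y] by (simp add: condT_def pXY_def flip: sum_divide_distrib)

definition swapXY :: "('t::finite,'x::finite,'y::finite) jdist \<Rightarrow> ('t,'y,'x) jdist" where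
  "swapXY Q = vec_lambda (\<lambda>(t,y,x). Q $ (t,x,y))"

lemma swapXY_nth [simp]: "swapXY Q $ (t,y,x) = Q $ (t,x,y)"
  by (simp add: swapXY_def)

lemma pXY_swapXY [simp]: "pXY (swapXY Q) y x = pXY Q x y"
  by (simp add: pXY_def)

lemma pY_swapXY [simp]: "pY (swapXY Q) x = pX Q x"
  by (simp add: pY_def pX_def)

lemma pTY_swapXY [simp]: "pTY (swapXY Q) t x = pTX Q t x"
  by (simp add: pTX_def pTY_def)

lemma sum_UNIV_swapXY:
  fixes g :: "'t::finite \<times> 'y::finite \<times> 'x::finite \<Rightarrow> 'a::comm_monoid_add"
  shows "(\<Sum>z\<in>UNIV. g z) = (\<Sum>(t,x,y)\<in>UNIV. g (t,y,x))"
  unfolding sum_UNIV_triple[of g] sum_UNIV_triple[where f = "\<lambda>(t,x,y). g (t,y,x)"]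
  by (simp add: sum.swap[where A = "UNIV :: 'x set"])

lemma swapXY_nonneg: "(\<And>z. 0 \<le> Q $ z) \<Longrightarrow> 0 \<le> swapXY Q $ z"
  by (cases z) simp

lemma swapXY_pos: "(\<And>z. 0 < Q $ z) \<Longrightarrow> 0 < swapXY Q $ z"
  by (cases z) simp

lemma is_dist_swapXY: "is_dist Q \<Longrightarrow> is_dist (swapXY Q)"
  using sum_UNIV_swapXY[of "\<lambda>z. swapXY Q $ z"]
  by (simp add: is_dist_def swapXY_nonneg sum_UNIV_triple)

lemma indep_T_X_given_Y_swapXY: "indep_T_X_given_Y (swapXY Q) \<longleftrightarrow> indep_T_Y_given_X Q"
  by (auto simp: indep_T_X_given_Y_def indep_T_Y_given_X_def)

lemma condMI_TX_Y_swapXY: "condMI_TX_Y (swapXY Q) = condMI_TY_X Q"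
  unfolding condMI_TX_Y_def condMI_TY_X_def
  by (subst sum_UNIV_swapXY) (simp only: swapXY_nth pY_swapXY pTY_swapXY pXY_swapXY case_prod_conv)

lemma condT_swapXY [simp]: "condT (swapXY Q) t y x = condT Q t x y"
  by (simp add: condT_def)

lemma diff_le_mult_ln_div:
  fixes a b :: real
  assumes "0 < a" "0 < b"
  shows "a - b \<le> a * ln (a / b)"
proof -
  have "ln (b / a) \<le> b / a - 1" using assms by (intro ln_le_minus_one) simp
  then have "a * ln (b / a) \<le> b - a" using assms by (simp add: field_simps)
  moreover have "ln (a / b) = - ln (b / a)" using assms by (simp add: ln_div)
  ultimately show ?thesis by simp
qed

lemma sum_mult_ln_div_ge:
  fixes q w :: "'a \<Rightarrow> real"
  assumes "finite A" and "\<And>z. z \<in> A \<Longrightarrow> 0 \<le> q z" and "\<And>z. z \<in> A \<Longrightarrow> 0 \<le> w z"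
    and "\<And>z. z \<in> A \<Longrightarrow> 0 < q z \<Longrightarrow> 0 < w z"
  shows "(\<Sum>z\<in>A. q z) - (\<Sum>z\<in>A. w z) \<le> (\<Sum>z\<in>A. if q z = 0 then 0 else q z * ln (q z / w z))"
proof -
  have "q z - w z \<le> (if q z = 0 then 0 else q z * ln (q z / w z))" if "z \<in> A" for z
    using assms(2-4)[OF that] diff_le_mult_ln_div[of "q z" "w z"] by auto
  then show ?thesis by (simp add: sum_subtractf[symmetric] sum_mono)
qed

lemma condMI_TX_Y_nonneg:
  assumes "is_dist Q"
  shows "0 \<le> condMI_TX_Y Q"
proof -
  have nonneg: "\<And>z. 0 \<le> Q $ z" and total: "(\<Sum>z\<in>UNIV. Q $ z) = 1"
    using assms unfolding is_dist_def by auto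
  \<comment> \<open>the law under which T and X are conditionally independent given Y\<close>
  define w where "w = (\<lambda>(t,x,y). pTY Q t y * pXY Q x y / pY Q y)"
  have w_nonneg: "0 \<le> w z" for z
    using nonneg by (auto simp: w_def pTY_def pXY_def pY_def sum_nonneg split: prod.splits)
  have w_pos: "0 < w (t,x,y)" if "0 < Q $ (t,x,y)" for t x y
    using that nth_le_pTY[of Q t x y] nth_le_pXY[of Q t x y] nth_le_pY[of Q t x y] nonneg
    by (simp add: w_def)
  have "(\<Sum>z\<in>UNIV. w z) = (\<Sum>y\<in>UNIV. (\<Sum>t\<in>UNIV. pTY Q t y) * (\<Sum>x\<in>UNIV. pXY Q x y) / pY Q y)"
    unfolding sum_UNIV_triple_Y_first[of w] by (simp add: w_def sum_product sum_divide_distrib)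
  also have "\<dots> = (\<Sum>y\<in>UNIV. pY Q y)"
    unfolding pY_eq_sum_pTY[symmetric] pY_eq_sum_pXY[symmetric] by simp
  finally have w_total: "(\<Sum>z\<in>UNIV. w z) = 1" by (simp add: sum_pY total)
  have "condMI_TX_Y Q = (\<Sum>z\<in>UNIV. if Q $ z = 0 then 0 else Q $ z * ln (Q $ z / w z))"
    unfolding condMI_TX_Y_def
    by (intro sum.cong refl) (auto simp: w_def field_simps)
  moreover have "0 < w z" if "0 < Q $ z" for z
    using w_pos that by (cases z) simp
  ultimately show ?thesis
    using sum_mult_ln_div_ge[of UNIV "\<lambda>z. Q $ z" w] nonneg w_nonneg total w_total by simp
qed

lemma condMI_TY_X_nonneg: "is_dist Q \<Longrightarrow> 0 \<le> condMI_TY_X Q"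
  using condMI_TX_Y_nonneg[OF is_dist_swapXY] by (simp add: condMI_TX_Y_swapXY)

lemma condMI_TX_Y_eq_0:
  fixes Q :: "('t::finite,'x::finite,'y::finite) jdist"
  assumes "\<And>z. 0 \<le> Q $ z" and "indep_T_X_given_Y Q"
  shows "condMI_TX_Y Q = 0"
  unfolding condMI_TX_Y_def
proof (intro sum.neutral ballI)
  fix z :: "'t \<times> 'x \<times> 'y"
  obtain t x y where z: "z = (t,x,y)" by (cases z)
  have "ln (Q $ (t,x,y) * pY Q y / (pTY Q t y * pXY Q x y)) = 0" if "Q $ (t,x,y) \<noteq> 0"
  proof -
    have "0 < Q $ (t,x,y) * pY Q y"
      using that assms(1)[of "(t,x,y)"] nth_le_pY[OF assms(1), of t x y] by (simp add: less_le)
    then show ?thesis using assms(2) by (simp add: indep_T_X_given_Y_def)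
  qed
  then show "(case z of (t,x,y) \<Rightarrow> if Q $ (t,x,y) = 0 then 0
       else Q $ (t,x,y) * ln (Q $ (t,x,y) * pY Q y / (pTY Q t y * pXY Q x y))) = 0"
    by (simp add: z)
qed

lemma condMI_TY_X_eq_0: "(\<And>z. 0 \<le> Q $ z) \<Longrightarrow> indep_T_Y_given_X Q \<Longrightarrow> condMI_TY_X Q = 0"
  using condMI_TX_Y_eq_0[of "swapXY Q"]
  by (simp add: swapXY_nonneg indep_T_X_given_Y_swapXY condMI_TX_Y_swapXY)

lemma UI_X_eq_0:
  assumes "Q \<in> DeltaP P" and "indep_T_X_given_Y Q"
  shows "UI_X P = 0"
  unfolding UI_X_def
proof (rule cInf_eq_minimum)
  show "0 \<in> condMI_TX_Y ` DeltaP P"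
    using condMI_TX_Y_eq_0[OF DeltaP_nonneg[OF assms(1)] assms(2)] assms(1) by (metis image_eqI)
  show "0 \<le> v" if "v \<in> condMI_TX_Y ` DeltaP P" for v
    using that condMI_TX_Y_nonneg by (auto simp: DeltaP_def)
qed

lemma UI_Y_eq_0:
  assumes "Q \<in> DeltaP P" and "indep_T_Y_given_X Q"
  shows "UI_Y P = 0"
  unfolding UI_Y_def
proof (rule cInf_eq_minimum)
  show "0 \<in> condMI_TY_X ` DeltaP P"
    using condMI_TY_X_eq_0[OF DeltaP_nonneg[OF assms(1)] assms(2)] assms(1) by (metis image_eqI)
  show "0 \<le> v" if "v \<in> condMI_TY_X ` DeltaP P" for v
    using that condMI_TY_X_nonneg by (auto simp: DeltaP_def)
qed

lemma rel_interior_extend_beyond: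
  fixes S :: "'a::euclidean_space set"
  assumes "x \<in> rel_interior S" and "y \<in> S"
  obtains c where "0 < c" and "(1 + c) *\<^sub>R x - c *\<^sub>R y \<in> S"
proof -
  obtain e where e: "0 < e" "ball x e \<inter> affine hull S \<subseteq> S" and "x \<in> S"
    using assms(1) unfolding mem_rel_interior_ball by blast
  have "0 < norm (y - x) + 1" by (simp add: add_nonneg_pos)
  define c where "c = e / (2 * (norm (y - x) + 1))"
  have "0 < c" unfolding c_def using e(1) \<open>0 < norm (y - x) + 1\<close> by simp
  have "x \<in> affine hull S" "y \<in> affine hull S"
    using \<open>x \<in> S\<close> assms(2) by (auto intro: hull_inc)
  then have "(1 + c) *\<^sub>R x - c *\<^sub>R y \<in> affine hull S"
    using mem_affine[OF affine_affine_hull, of x S y "1 + c" "- c"] by (simp add: scaleR_minus_left)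
  moreover have "dist x ((1 + c) *\<^sub>R x - c *\<^sub>R y) = c * norm (y - x)"
    using \<open>0 < c\<close> by (simp add: dist_norm algebra_simps norm_minus_commute flip: scaleR_diff_right)
  moreover have "c * norm (y - x) < c * (2 * (norm (y - x) + 1))"
    using \<open>0 < c\<close> \<open>0 < norm (y - x) + 1\<close> by (intro mult_strict_left_mono) auto
  moreover have "c * (2 * (norm (y - x) + 1)) = e"
    unfolding c_def using \<open>0 < norm (y - x) + 1\<close> by simp
  ultimately have "(1 + c) *\<^sub>R x - c *\<^sub>R y \<in> S" using e(2) by (auto simp: dist_commute)
  with \<open>0 < c\<close> show thesis by (rule that)
qed

lemma rel_interior_DeltaP_pos:
  assumes "Q \<in> rel_interior (DeltaP P)" and "z \<in> suppDeltaP P"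
  shows "0 < Q $ z"
proof -
  obtain Q' where Q': "Q' \<in> DeltaP P" "Q' $ z \<noteq> 0"
    using assms(2) unfolding suppDeltaP_def supp_def by auto
  then have "0 < Q' $ z" using DeltaP_nonneg[of Q' P z] by simp
  obtain c where "0 < c" and ext: "(1 + c) *\<^sub>R Q - c *\<^sub>R Q' \<in> DeltaP P"
    using rel_interior_extend_beyond[OF assms(1) Q'(1)] .
  have "0 \<le> (1 + c) * Q $ z - c * Q' $ z" using DeltaP_nonneg[OF ext, of z] by simp
  moreover have "0 < c * Q' $ z" using \<open>0 < c\<close> \<open>0 < Q' $ z\<close> by simp
  ultimately have "0 < (1 + c) * Q $ z" by linarith
  then show ?thesis using \<open>0 < c\<close> by (simp add: zero_less_mult_iff)
qed

lemma pTX_add_scaleR: "pTX (Q + s *\<^sub>R D) t x = pTX Q t x + s * pTX D t x"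
  by (simp add: pTX_def sum.distrib sum_distrib_left)

lemma pTY_add_scaleR: "pTY (Q + s *\<^sub>R D) t y = pTY Q t y + s * pTY D t y"
  by (simp add: pTY_def sum.distrib sum_distrib_left)

lemma pXY_add_scaleR: "pXY (Q + s *\<^sub>R D) x y = pXY Q x y + s * pXY D x y"
  by (simp add: pXY_def sum.distrib sum_distrib_left)

lemma add_scaleR_in_DeltaP:
  assumes "Q \<in> DeltaP P" and "\<And>t x. pTX D t x = 0" and "\<And>t y. pTY D t y = 0"
    and "\<And>z. 0 \<le> (Q + s *\<^sub>R D) $ z"
  shows "Q + s *\<^sub>R D \<in> DeltaP P"
proof -
  have "(\<Sum>z\<in>UNIV. D $ z) = (\<Sum>t\<in>UNIV. \<Sum>x\<in>UNIV. pTX D t x)"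
    unfolding sum_UNIV_triple[of "\<lambda>z. D $ z"] pTX_def ..
  then have "(\<Sum>z\<in>UNIV. (Q + s *\<^sub>R D) $ z) = (\<Sum>z\<in>UNIV. Q $ z)"
    using assms(2) by (simp add: sum.distrib flip: sum_distrib_left)
  then show ?thesis
    using assms by (simp add: DeltaP_def is_dist_def pTX_add_scaleR pTY_add_scaleR)
qed

lemma eventually_pos_add_scaleR:
  fixes Q D :: "real ^ 'n"
  assumes "\<And>i. 0 < Q $ i"
  shows "eventually (\<lambda>s. \<forall>i. 0 < (Q + s *\<^sub>R D) $ i) (nhds 0)"
proof (rule eventually_all_finite)
  fix i
  have "((\<lambda>s. Q $ i + s * D $ i) \<longlongrightarrow> Q $ i + 0 * D $ i) (nhds 0)"
    by (intro tendsto_intros filterlim_ident)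
  then show "eventually (\<lambda>s. 0 < (Q + s *\<^sub>R D) $ i) (nhds 0)"
    using order_tendstoD(1)[OF _ assms] by simp
qed

lemma mult_ln_div_has_derivative:
  fixes a b d e :: real
  assumes "0 < a" and "0 < b"
  shows "((\<lambda>s. (a + s * d) * ln ((a + s * d) / (b + s * e))) has_real_derivative
           d * ln (a / b) + d - a * (e / b)) (at 0)"
  using assms by (auto intro!: derivative_eq_intros simp: field_simps)

lemma sum_mult_div_pXY:
  assumes "\<And>x y. 0 < pXY Q x y"
  shows "(\<Sum>(t,x,y)\<in>UNIV. Q $ (t,x,y) * (f x y / pXY Q x y)) = (\<Sum>x\<in>UNIV. \<Sum>y\<in>UNIV. f x y)"
proof -
  have "(\<Sum>(t,x,y)\<in>UNIV. Q $ (t,x,y) * (f x y / pXY Q x y))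
      = (\<Sum>x\<in>UNIV. \<Sum>y\<in>UNIV. pXY Q x y * (f x y / pXY Q x y))"
    unfolding sum_UNIV_triple_XY_first pXY_def by (simp add: sum_distrib_right sum_divide_distrib)
  also have "\<dots> = (\<Sum>x\<in>UNIV. \<Sum>y\<in>UNIV. f x y)"
    using assms by (simp add: less_imp_neq[symmetric])
  finally show ?thesis .
qed

lemma condH_T_XY_has_derivative:
  fixes Q D :: "('t::finite,'x::finite,'y::finite) jdist"
  assumes pos: "\<And>z. 0 < Q $ z"
  shows "((\<lambda>s. condH_T_XY (Q + s *\<^sub>R D)) has_real_derivative
           - (\<Sum>(t,x,y)\<in>UNIV. D $ (t,x,y) * ln (condT Q t x y))) (at 0)"
proof -
  have pXY_Q_pos: "0 < pXY Q x y" for x y by (rule pXY_pos[OF pos])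
  define G where "G s = - (\<Sum>(t,x,y)\<in>UNIV. (Q $ (t,x,y) + s * D $ (t,x,y))
      * ln ((Q $ (t,x,y) + s * D $ (t,x,y)) / (pXY Q x y + s * pXY D x y)))" for s
  have "(G has_real_derivative - (\<Sum>(t,x,y)\<in>UNIV. D $ (t,x,y) * ln (condT Q t x y)
      + D $ (t,x,y) - Q $ (t,x,y) * (pXY D x y / pXY Q x y))) (at 0)"
    unfolding G_def condT_def split_def
    by (intro DERIV_minus DERIV_sum mult_ln_div_has_derivative pos pXY_Q_pos)
  \<comment> \<open>D changes each pXY by exactly the mass it adds to the cells above it\<close>
  moreover have "(\<Sum>(t,x,y)\<in>UNIV. D $ (t,x,y) - Q $ (t,x,y) * (pXY D x y / pXY Q x y)) = 0"
    using sum_mult_div_pXY[OF pXY_Q_pos, of "pXY D"] sum_pXY[of D]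
    by (simp add: sum_subtractf split_def)
  ultimately have "(G has_real_derivative - (\<Sum>(t,x,y)\<in>UNIV. D $ (t,x,y) * ln (condT Q t x y))) (at 0)"
    by (simp add: sum.distrib split_def add_diff_eq[symmetric])
  moreover have "eventually (\<lambda>s. condH_T_XY (Q + s *\<^sub>R D) = G s) (nhds 0)"
    using eventually_pos_add_scaleR[OF pos, of D]
    by eventually_elim (auto simp: G_def condH_T_XY_def pXY_add_scaleR less_imp_neq[symmetric])
  ultimately show ?thesis by (subst DERIV_cong_ev) auto
qed

lemma DERIV_local_max_eventually:
  fixes f :: "real \<Rightarrow> real"
  assumes "(f has_real_derivative l) (at x)" and "eventually (\<lambda>y. f y \<le> f x) (at x)"
  shows "l = 0"
  using has_derivative_local_max[OF assms[unfolded has_field_derivative_def]]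
  by (metis mult_cancel_left1 mult.commute)

lemma condH_T_XY_maximizer_stationary:
  assumes "Q \<in> DeltaP P" and pos: "\<And>z. 0 < Q $ z"
    and max: "\<forall>Q'\<in>DeltaP P. condH_T_XY Q' \<le> condH_T_XY Q"
    and "\<And>t x. pTX D t x = 0" and "\<And>t y. pTY D t y = 0"
  shows "(\<Sum>(t,x,y)\<in>UNIV. D $ (t,x,y) * ln (condT Q t x y)) = 0"
proof -
  have "eventually (\<lambda>s. condH_T_XY (Q + s *\<^sub>R D) \<le> condH_T_XY (Q + 0 *\<^sub>R D)) (nhds 0)"
    using eventually_pos_add_scaleR[OF pos, of D]
  proof eventually_elim
    case (elim s)
    then have "Q + s *\<^sub>R D \<in> DeltaP P"
      by (intro add_scaleR_in_DeltaP assms(1,4,5)) (use elim less_imp_le in blast)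
    with max show ?case by simp
  qed
  then have "eventually (\<lambda>s. condH_T_XY (Q + s *\<^sub>R D) \<le> condH_T_XY (Q + 0 *\<^sub>R D)) (at 0)"
    unfolding eventually_at_filter by (rule eventually_mono) simp
  from DERIV_local_max_eventually[OF condH_T_XY_has_derivative[OF pos] this] show ?thesis
    by simp
qed

definition basic_move :: "'t \<Rightarrow> 'x \<Rightarrow> 'x \<Rightarrow> 'y \<Rightarrow> 'y \<Rightarrow> ('t::finite,'x::finite,'y::finite) jdist" where
  "basic_move t x x' y y' = axis (t,x,y) 1 - axis (t,x,y') 1 - axis (t,x',y) 1 + axis (t,x',y') 1"

lemma pTX_basic_move: "pTX (basic_move t x x' y y') t0 x0 = 0"
  by (cases "t0 = t"; cases "x0 = x"; cases "x0 = x'")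
    (simp_all add: pTX_def basic_move_def axis_def sum.distrib sum_subtractf)

lemma pTY_basic_move: "pTY (basic_move t x x' y y') t0 y0 = 0"
  by (cases "t0 = t"; cases "y0 = y"; cases "y0 = y'")
    (simp_all add: pTY_def basic_move_def axis_def sum.distrib sum_subtractf)

lemma sum_axis_mult: "(\<Sum>z\<in>UNIV. axis a 1 $ z * h z) = (h a :: real)"
proof -
  have "(\<Sum>z\<in>UNIV. axis a 1 $ z * h z) = (\<Sum>z\<in>UNIV. if z = a then h a else 0)"
    by (intro sum.cong) (auto simp: axis_def)
  then show ?thesis by simp
qed

lemma sum_basic_move_mult:
  "(\<Sum>z\<in>UNIV. basic_move t x x' y y' $ z * h z)
     = h (t,x,y) - h (t,x,y') - h (t,x',y) + (h (t,x',y') :: real)"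
  by (simp add: basic_move_def left_diff_distrib distrib_right sum.distrib sum_subtractf sum_axis_mult)

lemma maximizer_condT_cross_ratio:
  assumes "Q \<in> DeltaP P" and pos: "\<And>z. 0 < Q $ z"
    and "\<forall>Q'\<in>DeltaP P. condH_T_XY Q' \<le> condH_T_XY Q"
  shows "condT Q t x y * condT Q t x' y' = condT Q t x y' * condT Q t x' y"
proof -
  have condT_pos: "0 < condT Q t x y" for t x y
    unfolding condT_def using pos pXY_pos[OF pos] by simp
  have "(\<Sum>(t0,x0,y0)\<in>UNIV. basic_move t x x' y y' $ (t0,x0,y0) * ln (condT Q t0 x0 y0)) = 0"
    using assms by (intro condH_T_XY_maximizer_stationary pTX_basic_move pTY_basic_move)
  then have "ln (condT Q t x y) - ln (condT Q t x y') - ln (condT Q t x' y) + ln (condT Q t x' y') = 0"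
    using sum_basic_move_mult[of t x x' y y' "\<lambda>(t,x,y). ln (condT Q t x y)"]
    by (simp add: case_prod_unfold)
  then have "ln (condT Q t x y * condT Q t x' y') = ln (condT Q t x y' * condT Q t x' y)"
    using condT_pos[of t x y] condT_pos[of t x' y'] condT_pos[of t x y'] condT_pos[of t x' y]
    by (simp add: ln_mult)
  then show ?thesis using condT_pos by simp
qed

lemma cross_products_eq_cases:
  fixes a b c d :: real
  assumes "a * d = b * c" and "(1 - a) * (1 - d) = (1 - b) * (1 - c)"
  shows "(a = b \<and> c = d) \<or> (a = c \<and> b = d)"
proof -
  have sum_eq: "a + d = b + c" using assms by (simp add: algebra_simps)
  have "(a - b) * (a - c) = a * (a - (b + c)) + b * c" by (simp add: algebra_simps)
  also have "\<dots> = 0" using assms(1) by (simp flip: sum_eq)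
  finally have "(a - b) * (a - c) = 0" .
  then show ?thesis using sum_eq by auto
qed

lemma constant_rows_or_columns:
  fixes p :: "'x \<Rightarrow> 'y \<Rightarrow> 'a"
  assumes sq: "\<And>x x' y y'. (p x y = p x y' \<and> p x' y = p x' y') \<or> (p x y = p x' y \<and> p x y' = p x' y')"
  shows "(\<forall>x y y'. p x y = p x y') \<or> (\<forall>x x' y. p x y = p x' y)"
proof (cases "\<forall>x y y'. p x y = p x y'")
  case False
  then obtain x0 y1 y2 where "p x0 y1 \<noteq> p x0 y2" by blast
  then have "p x0 y = p x' y" for x' y
    using sq[of x0 y y1 x'] sq[of x0 y y2 x'] by metis
  then show ?thesis by metis
qed simp

lemma binary_condT_constant_in_x_or_y:
  assumes "CARD('t) = 2" and pos: "\<And>z. 0 < Q $ z"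
    and cross: "\<And>t x x' y y'. condT Q t x y * condT Q t x' y' = condT Q t x y' * condT Q t x' y"
  shows "(\<forall>(t::'t::finite) x y y'. condT Q t x y = condT Q t x y')
       \<or> (\<forall>(t::'t) x x' y. condT Q t x y = condT Q t x' y)"
proof -
  obtain t0 t1 :: 't where UNIV_t: "UNIV = {t0, t1}" and "t0 \<noteq> t1"
    using assms(1) unfolding card_2_iff by blast
  have compl: "condT Q t1 x y = 1 - condT Q t0 x y" for x y
    using sum_condT[OF pos, of x y] \<open>t0 \<noteq> t1\<close> by (simp add: UNIV_t)
  have t_cases: "t = t0 \<or> t = t1" for t using UNIV_t by blast
  have "(\<forall>x y y'. condT Q t0 x y = condT Q t0 x y') \<or> (\<forall>x x' y. condT Q t0 x y = condT Q t0 x' y)"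
    using cross[of t0] cross[of t1]
    by (intro constant_rows_or_columns cross_products_eq_cases) (simp_all add: compl)
  then show ?thesis
  proof (elim disjE)
    assume "\<forall>x y y'. condT Q t0 x y = condT Q t0 x y'"
    then have "condT Q t x y = condT Q t x y'" for t x y y' using t_cases[of t] compl by auto
    then show ?thesis by blast
  next
    assume "\<forall>x x' y. condT Q t0 x y = condT Q t0 x' y"
    then have "condT Q t x y = condT Q t x' y" for t x x' y using t_cases[of t] compl by auto
    then show ?thesis by blast
  qed
qed

lemma indep_T_X_given_Y_if_condT_constant:
  assumes pos: "\<And>z. 0 < Q $ z" and const: "\<And>t x x' y. condT Q t x y = condT Q t x' y"
  shows "indep_T_X_given_Y Q"
  unfolding indep_T_X_given_Y_def
proof (intro allI)
  fix t x y
  have Q_eq: "Q $ (t,x',y) = condT Q t x y * pXY Q x' y" for x'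
    using const[of t x' y x] pXY_pos[OF pos, of x' y] pXY_pos[OF pos, of x y]
    by (simp add: condT_def field_simps)
  then have "pTY Q t y = condT Q t x y * pY Q y"
    by (simp add: pTY_def pY_eq_sum_pXY sum_distrib_left)
  then show "Q $ (t,x,y) * pY Q y = pTY Q t y * pXY Q x y" by (simp add: Q_eq)
qed

lemma indep_T_Y_given_X_if_condT_constant:
  "(\<And>z. 0 < Q $ z) \<Longrightarrow> (\<And>t x y y'. condT Q t x y = condT Q t x y') \<Longrightarrow> indep_T_Y_given_X Q"
  using indep_T_X_given_Y_if_condT_constant[of "swapXY Q"]
  by (simp add: swapXY_pos indep_T_X_given_Y_swapXY)

theorem mainTheorem12:
  fixes P Qt :: "('t::finite,'x::finite,'y::finite) jdist"
  assumes "CARD('t) = 2"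
    and "is_dist P"
    and "suppDeltaP P = UNIV"
    and "Qt \<in> rel_interior (DeltaP P)"
    and "\<forall>Q\<in>DeltaP P. condH_T_XY Q \<le> condH_T_XY Qt"
  shows "(indep_T_X_given_Y Qt \<or> indep_T_Y_given_X Qt) \<and> (UI_X P = 0 \<or> UI_Y P = 0)"
proof -
  have Qt_in: "Qt \<in> DeltaP P" using assms(4) rel_interior_subset by blast
  have pos: "\<And>z. 0 < Qt $ z" using rel_interior_DeltaP_pos[OF assms(4)] assms(3) by blast
  have "(\<forall>t x y y'. condT Qt t x y = condT Qt t x y') \<or> (\<forall>t x x' y. condT Qt t x y = condT Qt t x' y)"
    using maximizer_condT_cross_ratio[OF Qt_in pos assms(5)]
    by (intro binary_condT_constant_in_x_or_y assms(1) pos)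
  then have "indep_T_Y_given_X Qt \<or> indep_T_X_given_Y Qt"
    using indep_T_Y_given_X_if_condT_constant[OF pos] indep_T_X_given_Y_if_condT_constant[OF pos]
    by blast
  then show ?thesis using UI_X_eq_0[OF Qt_in] UI_Y_eq_0[OF Qt_in] by blast
qed

end
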